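(* Let $\phi:[0,\infty)\to\mathbb{R}$ be a strictly monotonic, not identically zero function of class $C^2([0,\infty))$ such that $\phi(r)=O(r^{-1/2-\alpha})$ as $r\to\infty$ for some $\alpha>0$. Define, for $r>0$, \[ \Phi(r)=-\int_r^{\infty}\phi'(s)^2\, s\,ds,\qquad \xi(r)=r+\int_r^{\infty}\bigl(1-\mathrm{e}^{\Phi(s)}\bigr)\,ds, \] \[ A(r)=2r^2\int_r^{\infty}\frac{\xi(s)-3m}{s^4}\,\mathrm{e}^{\Phi(s)}\,ds,\qquad f(r)=\mathrm{e}^{-2\Phi(r)}A(r), \] where $m$ is a real parameter satisfying $3m>\xi(0)$ (here $\xi(0)=\lim_{r\to0^+}\xi(r)$). Suppose $r_h>0$ is such that $f(r_h)=0$ and $f(r)>0$ for all $r>r_h$ (the event horizon). Then $A$ is strictly increasing on $(r_h,\infty)$.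
   Context: These quadratures give the general static, spherically symmetric, asymptotically flat solution of the Einstein–Klein–Gordon equations for a minimally coupled scalar field $\phi$ with metric $ds^2=A\,dt^2-dr^2/f-r^2(d\theta^2+\sin^2\theta\,d\varphi^2)$, $m$ being the Schwarzschild mass; the case $3m>\xi(0)$ is the scalar field black hole case. A prime denotes $d/dr$. *)

theory Defs
  imports "HOL-Analysis.Analysis" "HOL-Library.Landau_Symbols"
begin

text \<open>dphi stands for the derivative phi' of the scalar field.\<close>

definition Phi :: "(real \<Rightarrow> real) \<Rightarrow> real \<Rightarrow> real" where
  "Phi dphi r = - integral {r..} (\<lambda>s. (dphi s)^2 * s)"

definition xi :: "(real \<Rightarrow> real) \<Rightarrow> real \<Rightarrow> real" where
  "xi dphi r = r + integral {r..} (\<lambda>s. 1 - exp (Phi dphi s))"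

definition Afun :: "(real \<Rightarrow> real) \<Rightarrow> real \<Rightarrow> real \<Rightarrow> real" where
  "Afun dphi m r = 2 * r^2 * integral {r..} (\<lambda>s. (xi dphi s - 3*m) / s^4 * exp (Phi dphi s))"

definition ffun :: "(real \<Rightarrow> real) \<Rightarrow> real \<Rightarrow> real \<Rightarrow> real" where
  "ffun dphi m r = exp (- 2 * Phi dphi r) * Afun dphi m r"

end

theory Submission
  imports Defs
begin

text \<open>
  Write \<open>A(r) = 2 r\<^sup>2 I(r)\<close> with \<open>I(r) = \<integral>\<^sub>r\<^sup>\<infinity> g\<close> and
  \<open>g(s) = (\<xi>(s) - 3m) e\<^bsup>\<Phi>(s)\<^esup> / s\<^sup>4\<close>, so that \<open>A' = 2 (2 r I - r\<^sup>2 g(r))\<close>, and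
  \<open>I > 0\<close> outside the horizon because \<open>f > 0\<close> there. Since \<open>\<xi>' = e\<^sup>\<Phi>\<close> is positive and
  nondecreasing, \<open>\<xi>\<close> is convex. If \<open>\<xi>(r) \<le> 3m\<close> then \<open>g(r) \<le> 0\<close> and \<open>A'(r) > 0\<close> at once.
  Otherwise convexity gives \<open>\<xi>(s) - 3m \<ge> \<xi>(r) - 3m + (s - r) e\<^bsup>\<Phi>(r)\<^esup>\<close> for \<open>s \<ge> r\<close>,
  and together with \<open>e\<^bsup>\<Phi>(s)\<^esup> \<ge> e\<^bsup>\<Phi>(r)\<^esup>\<close> an explicit integration yields
  \<open>2 r I - r\<^sup>2 g(r) \<ge> e\<^bsup>\<Phi>(r)\<^esup> (r e\<^bsup>\<Phi>(r)\<^esup> - \<xi>(r) + 3m) / (3 r\<^sup>2)\<close>. This is positive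
  because convexity also gives \<open>\<xi>(r) - \<xi>(0) \<le> r e\<^bsup>\<Phi>(r)\<^esup>\<close> and \<open>3m > \<xi>(0)\<close>.
  Of the hypotheses only continuity of \<open>\<phi>'\<close> (from its differentiability), the two
  integrability conditions, \<open>3m > \<xi>(0)\<close> and \<open>f > 0\<close> on \<open>(r\<^sub>h, \<infinity>)\<close> are used.
\<close>

lemma integral_atLeast_split:
  fixes f :: "real \<Rightarrow> real"
  assumes "f integrable_on {b..}" "a \<le> b" "continuous_on {a..b} f"
  shows "integral {a..} f = integral {a..b} f + integral {b..} f"
proof -
  have "integral ({a..b} \<union> {b..}) f = integral {a..b} f + integral {b..} f"
  proof (rule integral_Un)
    have "{a..b} \<inter> {b..} = {b}" using assms(2) by auto
    then show "negligible ({a..b} \<inter> {b..})" by simp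
  qed (use integrable_continuous_interval[OF assms(3)] assms(1) in auto)
  moreover have "{a..b} \<union> {b..} = {a..}" using assms(2) by auto
  ultimately show ?thesis by simp
qed

lemma has_real_derivative_integral_atLeast:
  fixes f :: "real \<Rightarrow> real"
  assumes cont: "continuous_on {a<..} f" and f_int: "\<And>x. x > a \<Longrightarrow> f integrable_on {x..}"
    and "r > a"
  shows "((\<lambda>x. integral {x..} f) has_real_derivative - f r) (at r)"
proof -
  define c where "c = (a + r) / 2"
  define b where "b = r + 1"
  have between: "a < c" "c < r" "r < b" using \<open>r > a\<close> by (auto simp: c_def b_def)
  have "((\<lambda>x. integral {x..b} f) has_real_derivative - f r) (at r within {c..b})"
    by (rule integral_has_real_derivative') (use between in \<open>auto intro: continuous_on_subset[OF cont]\<close>)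
  moreover have "at r within {c..b} = at r"
    by (rule at_within_interior) (use between in auto)
  ultimately have "((\<lambda>x. integral {x..b} f + integral {b..} f) has_real_derivative - f r) (at r)"
    by (auto intro!: derivative_eq_intros)
  then show ?thesis
  proof (rule has_field_derivative_transform_within_open[of _ _ _ "{c<..<b}"])
    fix x assume "x \<in> {c<..<b}"
    then show "integral {x..b} f + integral {b..} f = integral {x..} f"
      using between f_int by (intro integral_atLeast_split[symmetric]) (auto intro: continuous_on_subset[OF cont])
  qed (use between in auto)
qed

lemma mono_derivative_secant_bounds:
  fixes F F' :: "real \<Rightarrow> real"
  assumes deriv: "\<And>x. x \<in> {a..b} \<Longrightarrow> (F has_real_derivative F' x) (at x)"
    and mono: "mono_on {a..b} F'" and "a \<le> b"
  shows "(b - a) * F' a \<le> F b - F a" and "F b - F a \<le> (b - a) * F' b"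
proof -
  have "F a - a * F' a \<le> F b - b * F' a"
  proof (rule DERIV_nonneg_imp_nondecreasing[OF \<open>a \<le> b\<close>])
    fix x assume "a \<le> x" "x \<le> b"
    then show "\<exists>y. ((\<lambda>x. F x - x * F' a) has_real_derivative y) (at x) \<and> y \<ge> 0"
      using deriv[of x] mono_onD[OF mono, of a x] \<open>a \<le> b\<close>
      by (intro exI[of _ "F' x - F' a"]) (auto intro!: derivative_eq_intros)
  qed
  then show "(b - a) * F' a \<le> F b - F a" by (simp add: algebra_simps)
  have "a * F' b - F a \<le> b * F' b - F b"
  proof (rule DERIV_nonneg_imp_nondecreasing[OF \<open>a \<le> b\<close>])
    fix x assume "a \<le> x" "x \<le> b"
    then show "\<exists>y. ((\<lambda>x. x * F' b - F x) has_real_derivative y) (at x) \<and> y \<ge> 0"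
      using deriv[of x] mono_onD[OF mono, of x b] \<open>a \<le> b\<close>
      by (intro exI[of _ "F' b - F' x"]) (auto intro!: derivative_eq_intros)
  qed
  then show "F b - F a \<le> (b - a) * F' b" by (simp add: algebra_simps)
qed

lemma diff_limit_at_right_le_mono_derivative:
  fixes F F' :: "real \<Rightarrow> real"
  assumes deriv: "\<And>x. x > 0 \<Longrightarrow> (F has_real_derivative F' x) (at x)"
    and mono: "mono_on {0<..} F'" and "F' r \<ge> 0"
    and lim: "(F \<longlongrightarrow> F0) (at_right 0)" and "r > 0"
  shows "F r - F0 \<le> r * F' r"
proof -
  have "F r - r * F' r \<le> F0"
  proof (rule tendsto_lowerbound[OF lim])
    show "\<forall>\<^sub>F x in at_right 0. F r - r * F' r \<le> F x"
    proof (rule eventually_at_rightI[of 0 r])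
      fix x assume x: "x \<in> {0<..<r}"
      have "mono_on {x..r} F'"
        using x by (auto intro: mono_on_subset[OF mono])
      then have "F r - F x \<le> (r - x) * F' r"
        using x deriv by (intro mono_derivative_secant_bounds(2)) auto
      moreover have "0 \<le> x * F' r" using x \<open>F' r \<ge> 0\<close> by simp
      ultimately show "F r - r * F' r \<le> F x"
        by (simp add: algebra_simps)
    qed (use \<open>r > 0\<close> in auto)
  qed simp
  then show ?thesis by simp
qed

lemma has_integral_affine_div_power4:
  fixes a b r :: real
  assumes "r > 0"
  shows "((\<lambda>s. (a + b * s) / s^4) has_integral (a / (3 * r^3) + b / (2 * r^2))) {r..}"
proof -
  have "(a + b * s) / s^4 = a * (1 / s^4) + b * (1 / s^3)" for s :: real
    by (cases "s = 0") (simp_all add: field_simps eval_nat_numeral)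
  moreover have "((\<lambda>s. a * (1 / s^4) + b * (1 / s^3)) has_integral
      (a * (1 / (3 * r^3)) + b * (1 / (2 * r^2)))) {r..}"
    using has_integral_inverse_power_to_inf[of 4 r] has_integral_inverse_power_to_inf[of 3 r] assms
    by (intro has_integral_add has_integral_mult_right) auto
  ultimately show ?thesis by simp
qed

lemma square_mult_integrand_less_tail_integral:
  fixes X E g :: "real \<Rightarrow> real" and X0 c r :: real
  assumes deriv: "\<And>x. x > 0 \<Longrightarrow> (X has_real_derivative E x) (at x)"
    and mono: "mono_on {0<..} E" and E_pos: "\<And>x. x > 0 \<Longrightarrow> E x > 0"
    and lim: "(X \<longlongrightarrow> X0) (at_right 0)" and "X0 < c" and "r > 0"
    and g: "g = (\<lambda>s. (X s - c) / s^4 * E s)"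
    and g_int: "g integrable_on {r..}" and I_pos: "integral {r..} g > 0"
  shows "r^2 * g r < 2 * r * integral {r..} g"
proof (cases "X r \<le> c")
  case True
  then have "g r \<le> 0"
    using \<open>r > 0\<close> E_pos[of r] by (simp add: g divide_nonpos_pos mult_nonpos_nonneg)
  then have "r^2 * g r \<le> 0" by (simp add: mult_nonneg_nonpos)
  moreover have "2 * r * integral {r..} g > 0" using I_pos \<open>r > 0\<close> by simp
  ultimately show ?thesis by linarith
next
  case False
  define W where "W = X r - c"
  define e where "e = E r"
  have W: "W > 0" and e: "e > 0" using False E_pos \<open>r > 0\<close> by (auto simp: W_def e_def)
  have "X r - X0 \<le> r * e"
    unfolding e_def using deriv mono E_pos[of r] \<open>r > 0\<close>
    by (intro diff_limit_at_right_le_mono_derivative[OF _ _ _ lim]) auto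
  with \<open>X0 < c\<close> have W_less: "W < r * e" by (simp add: W_def)
  have lower: "(e * (W - r * e) + e^2 * s) / s^4 \<le> g s" if "s \<in> {r..}" for s
  proof -
    have s: "s \<ge> r" "s > 0" using that \<open>r > 0\<close> by auto
    have "mono_on {r..s} E" using \<open>r > 0\<close> by (auto intro: mono_on_subset[OF mono])
    then have "(s - r) * e \<le> X s - X r"
      unfolding e_def using s deriv \<open>r > 0\<close> by (intro mono_derivative_secant_bounds(1)) auto
    then have X_lower: "W + (s - r) * e \<le> X s - c" by (simp add: W_def)
    have "e \<le> E s" using mono s \<open>r > 0\<close> by (auto simp: e_def intro: mono_onD)
    have "0 \<le> W + (s - r) * e" using W e s by simp
    have "(e * (W - r * e) + e^2 * s) / s^4 = (W + (s - r) * e) * e / s^4"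
      by (simp add: algebra_simps power2_eq_square)
    also have "\<dots> \<le> (X s - c) * E s / s^4"
      using X_lower \<open>e \<le> E s\<close> \<open>0 \<le> W + (s - r) * e\<close> e
      by (intro divide_right_mono mult_mono) auto
    finally show ?thesis by (simp add: g)
  qed
  have "e * (W - r * e) / (3 * r^3) + e^2 / (2 * r^2) \<le> integral {r..} g"
    using has_integral_affine_div_power4[OF \<open>r > 0\<close>] integrable_integral[OF g_int] lower
    by (rule has_integral_le)
  then have "2 * r * (e * (W - r * e) / (3 * r^3) + e^2 / (2 * r^2)) \<le> 2 * r * integral {r..} g"
    using \<open>r > 0\<close> by simp
  moreover have "2 * r * (e * (W - r * e) / (3 * r^3) + e^2 / (2 * r^2)) - r^2 * g r
      = e * (r * e - W) / (3 * r^2)"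
    using \<open>r > 0\<close> by (simp add: g W_def e_def field_simps eval_nat_numeral)
  moreover have "e * (r * e - W) / (3 * r^2) > 0" using e W_less \<open>r > 0\<close> by simp
  ultimately show ?thesis by linarith
qed

lemma strict_mono_on_square_mult_tail_integral:
  fixes X E g :: "real \<Rightarrow> real" and X0 c a :: real
  assumes deriv: "\<And>x. x > 0 \<Longrightarrow> (X has_real_derivative E x) (at x)"
    and mono: "mono_on {0<..} E" and E_pos: "\<And>x. x > 0 \<Longrightarrow> E x > 0"
    and E_cont: "continuous_on {0<..} E"
    and lim: "(X \<longlongrightarrow> X0) (at_right 0)" and "X0 < c" and "a \<ge> 0"
    and g: "g = (\<lambda>s. (X s - c) / s^4 * E s)"
    and I_pos: "\<And>r. r > a \<Longrightarrow> integral {r..} g > 0"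
  shows "strict_mono_on {a<..} (\<lambda>r. r^2 * integral {r..} g)"
proof -
  have g_int: "g integrable_on {r..}" if "r > a" for r
  proof (rule ccontr)
    assume "\<not> g integrable_on {r..}"
    then have "integral {r..} g = 0" by (rule not_integrable_integral)
    with I_pos[OF that] show False by simp
  qed
  have sub: "{a<..} \<subseteq> {0<..}" using \<open>a \<ge> 0\<close> by auto
  have "continuous_on {0<..} X"
    using deriv by (intro DERIV_continuous_on) (auto intro: has_field_derivative_at_within)
  then have g_cont: "continuous_on {a<..} g"
    unfolding g using sub
    by (intro continuous_intros continuous_on_subset[OF _ sub] E_cont) auto
  have deriv_tail: "((\<lambda>r. r^2 * integral {r..} g) has_real_derivative
      2 * r * integral {r..} g - r^2 * g r) (at r)" if "r > a" for r
    using has_real_derivative_integral_atLeast[OF g_cont g_int that]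
    by (auto intro!: derivative_eq_intros)
  have deriv_tail_pos: "2 * r * integral {r..} g - r^2 * g r > 0" if "r > a" for r
    using square_mult_integrand_less_tail_integral[OF deriv mono E_pos lim \<open>X0 < c\<close> _ g g_int I_pos]
      that \<open>a \<ge> 0\<close> by simp
  show ?thesis
  proof (rule strict_mono_onI)
    fix x y assume "x \<in> {a<..}" "x < y"
    show "x^2 * integral {x..} g < y^2 * integral {y..} g"
    proof (rule DERIV_pos_imp_increasing[OF \<open>x < y\<close>])
      fix z assume "x \<le> z"
      with \<open>x \<in> {a<..}\<close> have "z > a" by simp
      with deriv_tail deriv_tail_pos
      show "\<exists>d. ((\<lambda>r. r^2 * integral {r..} g) has_real_derivative d) (at z) \<and> d > 0"
        by blast
    qed
  qed
qed

context
  fixes dphi :: "real \<Rightarrow> real"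
  assumes dphi_cont: "continuous_on {0<..} dphi"
    and int_Phi: "\<And>r. r > 0 \<Longrightarrow> (\<lambda>s. (dphi s)^2 * s) integrable_on {r..}"
begin

lemma Phi_has_real_derivative:
  assumes "r > 0"
  shows "(Phi dphi has_real_derivative (dphi r)^2 * r) (at r)"
proof -
  have "continuous_on {0<..} (\<lambda>s. (dphi s)^2 * s)"
    using dphi_cont by (intro continuous_intros)
  from DERIV_minus[OF has_real_derivative_integral_atLeast[OF this int_Phi assms]]
  show ?thesis by (simp add: Phi_def[abs_def])
qed

lemma mono_on_Phi: "mono_on {0<..} (Phi dphi)"
proof (rule mono_onI)
  fix x y :: real assume "x \<in> {0<..}" "x \<le> y"
  show "Phi dphi x \<le> Phi dphi y"
  proof (rule DERIV_nonneg_imp_nondecreasing[OF \<open>x \<le> y\<close>])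
    fix z assume "x \<le> z"
    with \<open>x \<in> {0<..}\<close> have "(Phi dphi has_real_derivative (dphi z)^2 * z) (at z)"
      by (intro Phi_has_real_derivative) auto
    with \<open>x \<in> {0<..}\<close> \<open>x \<le> z\<close> show "\<exists>d. (Phi dphi has_real_derivative d) (at z) \<and> d \<ge> 0"
      by auto
  qed
qed

lemma continuous_on_Phi: "continuous_on {0<..} (Phi dphi)"
  using Phi_has_real_derivative
  by (intro DERIV_continuous_on) (auto intro: has_field_derivative_at_within)

lemma xi_has_real_derivative:
  assumes "\<And>r. r > 0 \<Longrightarrow> (\<lambda>s. 1 - exp (Phi dphi s)) integrable_on {r..}" and "r > 0"
  shows "(xi dphi has_real_derivative exp (Phi dphi r)) (at r)"
proof -
  have "continuous_on {0<..} (\<lambda>s. 1 - exp (Phi dphi s))"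
    using continuous_on_Phi by (intro continuous_intros)
  from DERIV_add[OF DERIV_ident has_real_derivative_integral_atLeast[OF this assms]]
  show ?thesis by (simp add: xi_def[abs_def])
qed

end

theorem proposition1:
  fixes \<phi> dphi ddphi :: "real \<Rightarrow> real" and \<alpha> m r\<^sub>h xi0 :: real
  assumes d1: "\<And>r. r \<ge> 0 \<Longrightarrow> (\<phi> has_real_derivative dphi r) (at r within {0..})"
      and d2: "\<And>r. r \<ge> 0 \<Longrightarrow> (dphi has_real_derivative ddphi r) (at r within {0..})"
      and c2: "continuous_on {0..} ddphi"
      and smono: "strict_mono_on {0..} \<phi> \<or> strict_antimono_on {0..} \<phi>"
      and nonzero: "\<exists>r\<ge>0. \<phi> r \<noteq> 0"
      and alpha: "\<alpha> > 0"
      and decay: "\<phi> \<in> O[at_top](\<lambda>r. r powr (-1/2 - \<alpha>))"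
      and int_Phi: "\<And>r. r > 0 \<Longrightarrow> (\<lambda>s. (dphi s)^2 * s) integrable_on {r..}"
      and int_xi: "\<And>r. r > 0 \<Longrightarrow> (\<lambda>s. 1 - exp (Phi dphi s)) integrable_on {r..}"
      and xi0: "(xi dphi \<longlongrightarrow> xi0) (at_right 0)"
      and mass: "3 * m > xi0"
      and rh_pos: "r\<^sub>h > 0"
      and horizon: "ffun dphi m r\<^sub>h = 0"
      and outside: "\<And>r. r > r\<^sub>h \<Longrightarrow> ffun dphi m r > 0"
  shows "strict_mono_on {r\<^sub>h<..} (Afun dphi m)"
proof -
  define g where "g = (\<lambda>s. (xi dphi s - 3 * m) / s^4 * exp (Phi dphi s))"
  have dphi_cont: "continuous_on {0<..} dphi"
  proof (rule DERIV_continuous_on)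
    fix r :: real assume "r \<in> {0<..}"
    then have "(dphi has_real_derivative ddphi r) (at r within {0..})" by (intro d2) simp
    then show "(dphi has_real_derivative ddphi r) (at r within {0<..})"
      by (rule DERIV_subset) auto
  qed
  have exp_Phi_mono: "mono_on {0<..} (\<lambda>s. exp (Phi dphi s))"
    using mono_onD[OF mono_on_Phi[OF dphi_cont int_Phi]] by (intro mono_onI) simp
  have exp_Phi_cont: "continuous_on {0<..} (\<lambda>s. exp (Phi dphi s))"
    using continuous_on_Phi[OF dphi_cont int_Phi] by (intro continuous_intros)
  have A: "Afun dphi m r = 2 * (r^2 * integral {r..} g)" for r
    by (simp add: Afun_def g_def)
  have I_pos: "integral {r..} g > 0" if "r > r\<^sub>h" for r
    using outside[OF that] rh_pos that by (simp add: ffun_def A zero_less_mult_iff)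
  have "strict_mono_on {r\<^sub>h<..} (\<lambda>r. r^2 * integral {r..} g)"
    using xi_has_real_derivative[OF dphi_cont int_Phi int_xi] exp_Phi_mono _ exp_Phi_cont xi0 mass _ g_def I_pos
    by (rule strict_mono_on_square_mult_tail_integral) (use rh_pos in auto)
  then show ?thesis
    unfolding strict_mono_on_def A by simp
qed

end
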